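(* For every positive integer $k$, $$W(2k+1,2)=\frac{1}{2^{2k-1}}\sum_{j=1}^k(2^{2j+1}-1)\,\zeta(2j+1)\,\bar\zeta(2k-2j).$$
   Context: For positive integers $k_1,k_2$, $\bar T(k_1,k_2):=4\sum_{0<n_1<n_2}\frac{(-1)^{n_2}}{(2n_1-1)^{k_1}(2n_2-2)^{k_2}}$, and $W(K,2):=\sum_{k_1+k_2=K,\,k_1,k_2\ge1}\bar T(k_1,k_2)$. $\zeta$ is the Riemann zeta function; $\bar\zeta(s):=\sum_{n\ge1}(-1)^{n-1}n^{-s}$ for $s\ge1$ and $\bar\zeta(0):=1/2$. *)

theory Defs
  imports Complex_Main
begin

text \<open>Riemann zeta at positive integers s (convergent for s >= 2).\<close>
definition zeta_nat :: "nat \<Rightarrow> real" where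
  "zeta_nat s = (\<Sum>n. 1 / (real (Suc n)) ^ s)"

definition zetabar :: "nat \<Rightarrow> real" where
  "zetabar s = (if s = 0 then 1 / 2 else (\<Sum>n. (-1) ^ n / (real (Suc n)) ^ s))"

definition Tbar :: "nat \<Rightarrow> nat \<Rightarrow> real" where
  "Tbar k1 k2 = 4 * (\<Sum>n2. \<Sum>n1\<in>{0<..<n2}.
      (-1) ^ n2 / ((2 * real n1 - 1) ^ k1 * (2 * real n2 - 2) ^ k2))"

definition W2 :: "nat \<Rightarrow> real" where
  "W2 K = (\<Sum>k1\<in>{1..K-1}. Tbar k1 (K - k1))"

end

theory Submission
  imports Defs "HOL-Analysis.Analysis" "HOL-Real_Asymp.Real_Asymp"
begin

text \<open>
  Write b = 2n + 1 and N = 2m + 2. Then W(2k+1,2) is four times the alternating series over m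
  of the sums over n \<le> m of g = \<Sum>i=1..2k. b^-i N^-(2k+1-i) = (b^-2k - N^-2k) / (N - b).
  Removing from g the terms with odd powers of b, which make sense for every n, leaves
  (b^-2k - N^-2k)/2 \<cdot> (1/|N - b| + 1/(N + b)) whether n \<le> m or n > m. Summing over the triangles
  n + m < R and letting R \<rightarrow> \<infinity>, the odd terms produce the products \<lambda>(2j+1) \<beta>(2k-2j) of the
  Dirichlet lambda function and the alternating series \<beta>(e) = \<Sum>m. (-1)^m / N^e; the b^-2k
  part gives \<lambda>(2k+1)/2 because \<Sum>m. (-1)^m (1/|N - b| + 1/(N + b)) = 1/b; and the N^-2k part
  cancels the logarithmically growing odd term j = 0. Finally \<lambda>(s) = (1 - 2^-s) \<zeta>(s) and
  \<beta>(e) = zetabar(e) / 2^e.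
\<close>

section \<open>Sums of inverse powers\<close>

lemma sum_inverse_powers_telescope:
  fixes x y :: "'a::field"
  assumes "x \<noteq> 0" "y \<noteq> 0"
  shows "(y - x) * (\<Sum>i=1..n. 1 / (x^i * y^(Suc n - i))) = 1/x^n - 1/y^n"
proof (induction n)
  case 0 then show ?case by simp
next
  case (Suc n)
  define S where "S = (\<Sum>i=1..n. 1 / (x^i * y^(Suc n - i)))"
  have "(\<Sum>i=1..n. 1 / (x^i * y^(Suc (Suc n) - i))) = (\<Sum>i=1..n. (1/y) * (1 / (x^i * y^(Suc n - i))))"
    by (intro sum.cong refl) (simp add: Suc_diff_le)
  then have "(\<Sum>i=1..Suc n. 1 / (x^i * y^(Suc (Suc n) - i))) = (1/y) * S + 1/(x^Suc n * y)"
    by (simp add: S_def sum_distrib_left)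
  then have "(y - x) * (\<Sum>i=1..Suc n. 1 / (x^i * y^(Suc (Suc n) - i))) =
      (1/y) * ((y - x) * S) + (y - x)/(x^Suc n * y)"
    by (simp only: distrib_left mult.left_commute times_divide_eq_right mult_1_right)
  also have "\<dots> = (1/y) * (1/x^n - 1/y^n) + (y - x)/(x^Suc n * y)"
    using Suc by (simp add: S_def)
  also have "\<dots> = 1/x^Suc n - 1/y^Suc n"
    using assms by (simp add: field_simps)
  finally show ?case .
qed

lemma sum_inverse_powers:
  fixes x y :: "'a::field"
  assumes "x \<noteq> 0" "y \<noteq> 0" "x \<noteq> y"
  shows "(\<Sum>i=1..n. 1 / (x^i * y^(Suc n - i))) = (1/x^n - 1/y^n) / (y - x)"
  using sum_inverse_powers_telescope[OF assms(1,2), of n] assms(3)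
  by (simp add: field_simps)

lemma sum_odd_even_split:
  fixes f :: "nat \<Rightarrow> 'a::comm_monoid_add"
  shows "(\<Sum>i=1..2*k. f i) = (\<Sum>j<k. f (2*j+1)) + (\<Sum>j<k. f (2*j+2))"
proof (induction k)
  case (Suc k)
  have "{1..2 * Suc k} = insert (2*k+2) (insert (2*k+1) {1..2*k})" by auto
  then show ?case using Suc by (simp add: ac_simps)
qed simp

text \<open>Comparing the sums for x and -x isolates the terms with odd powers of x.\<close>
lemma sum_odd_inverse_powers:
  fixes x y :: "'a::field_char_0" and k :: nat
  assumes "x \<noteq> 0" "y \<noteq> 0" "x \<noteq> y" "x \<noteq> - y"
  defines "D \<equiv> 1/x^(2*k) - 1/y^(2*k)"
  shows "(\<Sum>j<k. 1 / (x^(2*j+1) * y^(2*k-2*j))) = (D / (y - x) - D / (y + x)) / 2"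
proof -
  define S_odd where "S_odd = (\<Sum>j<k. 1 / (x^(2*j+1) * y^(2*k-2*j)))"
  define S_even where "S_even = (\<Sum>j<k. 1 / (x^(2*j+2) * y^(2*k-2*j-1)))"
  have split: "(\<Sum>i=1..2*k. 1 / (z^i * y^(Suc (2*k) - i))) =
      (\<Sum>j<k. 1 / (z^(2*j+1) * y^(2*k-2*j))) + (\<Sum>j<k. 1 / (z^(2*j+2) * y^(2*k-2*j-1)))"
    for z :: 'a
  proof -
    have "Suc (2*k) - (2*j+1) = 2*k-2*j" "Suc (2*k) - (2*j+2) = 2*k-2*j-1" for j
      by simp_all
    then show ?thesis by (simp only: sum_odd_even_split)
  qed
  have "S_odd + S_even = D / (y - x)"
    using sum_inverse_powers[OF assms(1-3), of "2*k"] split[of x]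
    by (simp add: S_odd_def S_even_def D_def)
  moreover have "- S_odd + S_even = D / (y + x)"
  proof -
    have "(\<Sum>j<k. 1 / ((-x)^(2*j+1) * y^(2*k-2*j))) = - S_odd"
      by (simp add: S_odd_def power_add sum_negf[symmetric])
    moreover have "(\<Sum>j<k. 1 / ((-x)^(2*j+2) * y^(2*k-2*j-1))) = S_even"
      by (simp add: S_even_def)
    ultimately show ?thesis
      using sum_inverse_powers[of "-x" y "2*k"] split[of "-x"] assms
      by (simp add: D_def add.commute minus_equation_iff[of x])
  qed
  ultimately show ?thesis unfolding S_odd_def[symmetric] by (simp add: field_simps)
qed

lemma sum_inverse_powers_minus_odd:
  fixes x y :: real and k :: nat
  assumes "0 < x" "0 < y" "x \<noteq> y"
  defines "D \<equiv> 1 / x ^ (2*k) - 1 / y ^ (2*k)"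
  shows "(if x < y then (\<Sum>i=1..2*k. 1 / (x^i * y^(Suc (2*k) - i))) else 0)
      - (\<Sum>j<k. 1 / (x^(2*j+1) * y^(2*k-2*j))) = D / 2 * (1 / \<bar>y - x\<bar> + 1 / (y + x))"
proof -
  have all: "(\<Sum>i=1..2*k. 1 / (x^i * y^(Suc (2*k) - i))) = D / (y - x)"
    unfolding D_def by (rule sum_inverse_powers) (use assms in auto)
  have odd: "(\<Sum>j<k. 1 / (x^(2*j+1) * y^(2*k-2*j))) = (D / (y - x) - D / (y + x)) / 2"
    unfolding D_def by (rule sum_odd_inverse_powers) (use assms in auto)
  have half: "D / 2 * (1 / u + 1 / (y + x)) = (D / u + D / (y + x)) / 2" for u
    by (simp add: field_simps)
  have avg: "a - (a - b) / 2 = (a + b) / 2" "- ((a - b) / 2) = (- a + b) / 2" for a b :: real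
    by (simp_all add: field_simps)
  show ?thesis
  proof (cases "x < y")
    case True
    then have "\<bar>y - x\<bar> = y - x" by simp
    then show ?thesis unfolding all odd half if_P[OF True] by (simp only: avg)
  next
    case False
    then have "\<bar>y - x\<bar> = x - y" by simp
    moreover have "D / (x - y) = - (D / (y - x))"
      by (metis minus_diff_eq minus_divide_right)
    ultimately show ?thesis unfolding odd half if_not_P[OF False] diff_0 by (simp only: avg)
  qed
qed

section \<open>The summand of the double series\<close>

text \<open>With n1 = n + 1 and n2 = m + 2, the factors 2 n1 - 1 and 2 n2 - 2 of Tbar
  become nth_odd n and nth_even m.\<close>
definition nth_odd :: "nat \<Rightarrow> real" where "nth_odd n = 2 * real n + 1"
definition nth_even :: "nat \<Rightarrow> real" where "nth_even m = 2 * real m + 2"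

lemma nth_odd_ge_1: "1 \<le> nth_odd n"
  and nth_even_ge_2: "2 \<le> nth_even m"
  and nth_odd_pos [simp]: "0 < nth_odd n"
  and nth_even_pos [simp]: "0 < nth_even m"
  by (simp_all add: nth_odd_def nth_even_def)

lemma nth_odd_neq_nth_even: "nth_odd n \<noteq> nth_even m"
proof
  assume "nth_odd n = nth_even m"
  then have "real (2*n+1) = real (2*m+2)" by (simp add: nth_odd_def nth_even_def)
  then have "2*n+1 = 2*m+2" by (simp only: of_nat_eq_iff)
  then show False by presburger
qed

lemma nth_odd_less_nth_even_iff: "nth_odd n < nth_even m \<longleftrightarrow> n \<le> m"
  by (auto simp: nth_odd_def nth_even_def)

definition cross_term :: "nat \<Rightarrow> nat \<Rightarrow> nat \<Rightarrow> nat \<Rightarrow> real" where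
  "cross_term k i n m = 1 / (nth_odd n ^ i * nth_even m ^ (Suc (2*k) - i))"

definition cross_sum :: "nat \<Rightarrow> nat \<Rightarrow> nat \<Rightarrow> real" where
  "cross_sum k n m = (\<Sum>i=1..2*k. cross_term k i n m)"

definition cross_sum_odd :: "nat \<Rightarrow> nat \<Rightarrow> nat \<Rightarrow> real" where
  "cross_sum_odd k n m = (\<Sum>j<k. cross_term k (2*j+1) n m)"

definition pair_kernel :: "nat \<Rightarrow> nat \<Rightarrow> real" where
  "pair_kernel n m = 1 / \<bar>nth_even m - nth_odd n\<bar> + 1 / (nth_even m + nth_odd n)"

lemma cross_term_nonneg: "0 \<le> cross_term k i n m"
  by (simp add: cross_term_def less_imp_le)

lemma cross_term_antimono: "cross_term k i n (Suc m) \<le> cross_term k i n m"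
  unfolding cross_term_def
  by (intro divide_left_mono mult_left_mono power_mono mult_pos_pos zero_less_power)
     (auto simp: nth_even_def less_imp_le)

lemma cross_sum_nonneg: "0 \<le> cross_sum k n m"
  unfolding cross_sum_def by (intro sum_nonneg cross_term_nonneg)

lemma cross_sum_antimono: "cross_sum k n (Suc m) \<le> cross_sum k n m"
  unfolding cross_sum_def by (intro sum_mono cross_term_antimono)

lemma cross_sum_minus_odd:
  "(if n \<le> m then cross_sum k n m else 0) - cross_sum_odd k n m =
     (1 / nth_odd n ^ (2*k) - 1 / nth_even m ^ (2*k)) / 2 * pair_kernel n m"
proof -
  have "cross_sum k n m = (\<Sum>i=1..2*k. 1 / (nth_odd n ^ i * nth_even m ^ (Suc (2*k) - i)))"
    "cross_sum_odd k n m = (\<Sum>j<k. 1 / (nth_odd n ^ (2*j+1) * nth_even m ^ (2*k-2*j)))"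
    by (simp_all add: cross_sum_def cross_sum_odd_def cross_term_def)
  then show ?thesis
    using sum_inverse_powers_minus_odd[OF nth_odd_pos nth_even_pos nth_odd_neq_nth_even, of n m k]
    unfolding nth_odd_less_nth_even_iff pair_kernel_def by (simp only:)
qed

section \<open>Partial sums of odd reciprocals\<close>

definition leibniz_partial :: "nat \<Rightarrow> real" where
  "leibniz_partial x = (\<Sum>n<x. (-1)^n / nth_odd n)"

definition odd_harmonic :: "nat \<Rightarrow> real" where
  "odd_harmonic x = (\<Sum>n<x. 1 / nth_odd n)"

text \<open>The odd extension of odd_harmonic to the integers; it turns the column sums of
  pair_kernel into a closed form valid on both sides of the diagonal.\<close>
definition odd_harmonic_int :: "int \<Rightarrow> real" where
  "odd_harmonic_int z = (if 0 \<le> z then odd_harmonic (nat z) else - odd_harmonic (nat (-z)))"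

lemma odd_harmonic_int_step:
  "odd_harmonic_int (z + 1) - odd_harmonic_int z = 1 / \<bar>2 * real_of_int z + 1\<bar>"
proof (cases "z \<ge> 0")
  case True
  then have "nat (z + 1) = Suc (nat z)" by simp
  then show ?thesis using True by (simp add: odd_harmonic_int_def odd_harmonic_def nth_odd_def)
next
  case False
  then have "nat (-z) = Suc (nat (-(z + 1)))" by simp
  moreover have "\<bar>2 * real_of_int z + 1\<bar> = 2 * real (nat (-(z + 1))) + 1" using False by simp
  ultimately show ?thesis
    using False by (simp add: odd_harmonic_int_def odd_harmonic_def nth_odd_def)
qed

lemma leibniz_partial_abs_step:
  "leibniz_partial (nat \<bar>z + 1\<bar>) - leibniz_partial (nat \<bar>z\<bar>) =
     (-1)^(nat \<bar>z\<bar>) / \<bar>2 * real_of_int z + 1\<bar>"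
proof (cases "z \<ge> 0")
  case True
  then have "nat \<bar>z + 1\<bar> = Suc (nat \<bar>z\<bar>)" by simp
  then show ?thesis using True by (simp add: leibniz_partial_def nth_odd_def)
next
  case False
  define w where "w = nat (-(z + 1))"
  have "nat \<bar>z\<bar> = Suc w" "nat \<bar>z + 1\<bar> = w" "\<bar>2 * real_of_int z + 1\<bar> = 2 * real w + 1"
    using False by (simp_all add: w_def)
  then show ?thesis by (simp add: leibniz_partial_def nth_odd_def)
qed

lemma alternating_sum_bounds:
  fixes a :: "nat \<Rightarrow> 'a::linordered_idom"
  assumes "\<And>i. a (Suc i) \<le> a i" "\<And>i. 0 \<le> a i"
  shows "0 \<le> (\<Sum>i<x. (-1)^i * a i) \<and> (\<Sum>i<x. (-1)^i * a i) \<le> a 0"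
  using assms
proof (induction x arbitrary: a)
  case (Suc x)
  have "0 \<le> (\<Sum>i<x. (-1)^i * a (Suc i)) \<and> (\<Sum>i<x. (-1)^i * a (Suc i)) \<le> a (Suc 0)"
    using Suc.IH[of "\<lambda>i. a (Suc i)"] Suc.prems by auto
  moreover have "(\<Sum>i<Suc x. (-1)^i * a i) = a 0 - (\<Sum>i<x. (-1)^i * a (Suc i))"
    by (subst sum.lessThan_Suc_shift) (simp add: sum_negf[symmetric])
  ultimately show ?case using Suc.prems(1)[of 0] Suc.prems(2)[of 0] by auto
qed simp

lemma abs_alternating_sum_le:
  fixes a :: "nat \<Rightarrow> 'a::linordered_idom"
  assumes "\<And>i. a (Suc i) \<le> a i" "\<And>i. 0 \<le> a i"
  shows "\<bar>\<Sum>i<x. (-1)^i * a i\<bar> \<le> a 0"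
  using alternating_sum_bounds[of a x] assms by auto

lemma abs_alternating_sum_atLeastLessThan_le:
  fixes a :: "nat \<Rightarrow> real"
  assumes "\<And>i. a (Suc i) \<le> a i" "\<And>i. 0 \<le> a i"
  shows "\<bar>\<Sum>m\<in>{h..<R}. (-1)^m * a m\<bar> \<le> a h"
proof (cases "h \<le> R")
  case True
  have "(\<Sum>m\<in>{h..<R}. (-1)^m * a m) = (-1)^h * (\<Sum>i<R-h. (-1)^i * a (h+i))"
    using sum.shift_bounds_nat_ivl[of "\<lambda>m. (-1)^m * a m" 0 h "R-h"] True
    by (simp add: sum_distrib_left power_add lessThan_atLeast0 algebra_simps)
  then have "\<bar>\<Sum>m\<in>{h..<R}. (-1)^m * a m\<bar> = \<bar>\<Sum>i<R-h. (-1)^i * a (h+i)\<bar>"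
    by (simp add: abs_mult power_abs)
  also have "\<dots> \<le> a (h+0)"
    by (rule abs_alternating_sum_le) (auto intro: assms simp del: add_0_right)
  finally show ?thesis by simp
qed (simp add: assms)

lemma abs_leibniz_partial_le: "\<bar>leibniz_partial x\<bar> \<le> 1"
proof -
  have "\<bar>\<Sum>i<x. (-1)^i * (1 / nth_odd i)\<bar> \<le> 1 / nth_odd 0"
    by (rule abs_alternating_sum_le) (auto simp: nth_odd_def frac_le)
  then show ?thesis by (simp add: leibniz_partial_def nth_odd_def)
qed

lemma leibniz_partial_convergent: "convergent leibniz_partial"
proof -
  have "summable (\<lambda>i. (-1)^i * (1 / nth_odd i))"
  proof (rule summable_Leibniz'(1))
    show "(\<lambda>i. 1 / nth_odd i) \<longlonglongrightarrow> 0"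
      unfolding nth_odd_def by real_asymp
  qed (auto simp: nth_odd_def frac_le)
  then show ?thesis
    unfolding leibniz_partial_def[abs_def] convergent_def
    by (auto dest: summable_LIMSEQ)
qed

lemma odd_harmonic_add: "odd_harmonic (a + c) = odd_harmonic a + (\<Sum>j<c. 1 / nth_odd (a + j))"
  by (induction c) (simp_all add: odd_harmonic_def)

lemma odd_harmonic_nonneg: "0 \<le> odd_harmonic x"
  by (simp add: odd_harmonic_def sum_nonneg less_imp_le)

lemma odd_harmonic_mono: "a \<le> b \<Longrightarrow> odd_harmonic a \<le> odd_harmonic b"
  unfolding odd_harmonic_def by (rule sum_mono2) (auto simp: less_imp_le)

lemma odd_harmonic_le_add: "odd_harmonic a \<le> odd_harmonic (a + c)"
  by (rule odd_harmonic_mono) simp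

lemma odd_harmonic_add_le: "odd_harmonic (a + c) - odd_harmonic a \<le> odd_harmonic c"
  unfolding odd_harmonic_add by (simp add: odd_harmonic_def sum_mono frac_le nth_odd_def)

lemma odd_harmonic_add_le_div: "odd_harmonic (a + c) - odd_harmonic a \<le> real c / nth_odd a"
proof -
  have "(\<Sum>j<c. 1 / nth_odd (a + j)) \<le> (\<Sum>j<c. 1 / nth_odd a)"
    by (intro sum_mono) (simp add: frac_le nth_odd_def)
  then show ?thesis unfolding odd_harmonic_add by simp
qed

lemma odd_harmonic_le_sqrt: "odd_harmonic c \<le> 2 * sqrt (real c)"
proof (induction c)
  case (Suc c)
  define x where "x = sqrt (real c)"
  define y where "y = sqrt (real (Suc c))"
  have pos: "0 < x + y" by (simp add: x_def y_def add_nonneg_pos)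
  have "y \<le> sqrt ((real (Suc c))\<^sup>2)"
    unfolding y_def by (rule real_sqrt_le_mono) (simp add: power2_eq_square)
  then have "y \<le> real c + 1" by simp
  moreover have "x \<le> y" by (simp add: x_def y_def)
  ultimately have "x + y \<le> 2 * nth_odd c"
    unfolding nth_odd_def by simp
  then have bound: "1 / nth_odd c \<le> 2 / (x + y)"
    using pos by (simp add: field_simps)
  have "(y - x) * (x + y) = 1"
    by (simp add: x_def y_def algebra_simps)
  then have "2 / (x + y) = 2 * (y - x)"
    using pos by (simp add: field_simps)
  with bound Suc show ?case by (simp add: odd_harmonic_def x_def y_def)
qed (simp add: odd_harmonic_def)

lemma tannery_lessThan:
  fixes f :: "nat \<Rightarrow> nat \<Rightarrow> real"
  assumes lim: "\<And>n. (\<lambda>R. f R n) \<longlonglongrightarrow> l n"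
    and bound: "\<And>R n. n < R \<Longrightarrow> \<bar>f R n\<bar> \<le> M n"
    and "summable M"
  shows "(\<lambda>R. \<Sum>n<R. f R n) \<longlonglongrightarrow> (\<Sum>n. l n)"
proof -
  define a where "a n R = (if n < R then f R n else 0)" for n R
  have "(\<lambda>R. a n R) \<longlonglongrightarrow> l n" for n
  proof -
    have "eventually (\<lambda>R. f R n = a n R) sequentially"
      using eventually_gt_at_top[of n] by eventually_elim (simp add: a_def)
    then show ?thesis using lim[of n] tendsto_cong by fastforce
  qed
  moreover have "eventually (\<lambda>(n, R). norm (a n R) \<le> M n) (at_top \<times>\<^sub>F sequentially)"
  proof (intro always_eventually allI)
    fix p :: "nat \<times> nat"
    obtain n R where p: "p = (n, R)" by (cases p)
    have "0 \<le> M n" using bound[of n "Suc n"] by linarith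
    then show "(\<lambda>(n, R). norm (a n R) \<le> M n) p" using bound[of n R] by (auto simp: a_def p)
  qed
  ultimately have "(\<lambda>R. suminf (\<lambda>n. a n R)) \<longlonglongrightarrow> suminf l"
    using tannerys_theorem[of a l sequentially M] \<open>summable M\<close> by simp
  moreover have "suminf (\<lambda>n. a n R) = (\<Sum>n<R. f R n)" for R
    by (subst suminf_finite[of "{..<R}"]) (auto simp: a_def)
  ultimately show ?thesis by simp
qed

section \<open>Row and column sums of the pair kernel\<close>

definition kernel_alt_row :: "nat \<Rightarrow> nat \<Rightarrow> real" where
  "kernel_alt_row n R = (\<Sum>m<R-n. (-1)^m * pair_kernel n m)"

definition kernel_col :: "nat \<Rightarrow> nat \<Rightarrow> real" where
  "kernel_col m R = (\<Sum>n<R-m. pair_kernel n m)"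

lemma nth_even_minus_nth_odd: "nth_even m - nth_odd n = 2 * real_of_int (int m - int n) + 1"
  by (simp add: nth_even_def nth_odd_def)

lemma nth_even_plus_nth_odd: "nth_even m + nth_odd n = nth_odd (n + m + 1)"
  by (simp add: nth_even_def nth_odd_def)

lemma kernel_alt_row_closed:
  "kernel_alt_row n (n + t) =
     (-1)^n * (leibniz_partial (nat \<bar>int t - int n\<bar>) - leibniz_partial (n + t + 1)) + 1 / nth_odd n"
proof (induction t)
  case 0
  then show ?case by (simp add: kernel_alt_row_def leibniz_partial_def)
next
  case (Suc t)
  define z where "z = int t - int n"
  have z: "int (Suc t) - int n = z + 1" by (simp add: z_def)
  have odd: "leibniz_partial (n + Suc t + 1) - leibniz_partial (n + t + 1) =
      (-1)^(n + t + 1) / (nth_even t + nth_odd n)"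
    by (simp add: leibniz_partial_def nth_even_plus_nth_odd)
  have diff: "leibniz_partial (nat \<bar>z + 1\<bar>) - leibniz_partial (nat \<bar>z\<bar>) =
      (-1)^(nat \<bar>z\<bar>) / \<bar>nth_even t - nth_odd n\<bar>"
    unfolding nth_even_minus_nth_odd z_def by (rule leibniz_partial_abs_step)
  have sign1: "(-1::real)^n * (-1)^(nat \<bar>z\<bar>) = (-1)^t"
    by (cases "n \<le> t") (auto simp: z_def minus_one_power_iff nat_diff_distrib power_add[symmetric])
  have sign2: "(-1::real)^n * (-1)^(n + t + 1) = - ((-1)^t)"
    by (simp add: power_add minus_one_power_iff)
  have "(-1)^n * (leibniz_partial (nat \<bar>z + 1\<bar>) - leibniz_partial (n + Suc t + 1)) + 1 / nth_odd n
      = ((-1)^n * (leibniz_partial (nat \<bar>z\<bar>) - leibniz_partial (n + t + 1)) + 1 / nth_odd n)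
        + (-1)^n * (leibniz_partial (nat \<bar>z + 1\<bar>) - leibniz_partial (nat \<bar>z\<bar>))
        - (-1)^n * (leibniz_partial (n + Suc t + 1) - leibniz_partial (n + t + 1))"
    by (simp add: algebra_simps)
  also have "\<dots> = kernel_alt_row n (n + t) + (-1)^t * pair_kernel n t"
    unfolding odd diff Suc.IH[folded z_def, symmetric] pair_kernel_def
    using sign1 sign2 by (simp add: mult.assoc[symmetric] algebra_simps)
  also have "\<dots> = kernel_alt_row n (n + Suc t)"
    by (simp add: kernel_alt_row_def)
  finally show ?case unfolding z by simp
qed

lemma kernel_alt_row_tendsto: "(\<lambda>R. kernel_alt_row n R) \<longlonglongrightarrow> 1 / nth_odd n"
proof -
  obtain L where L: "leibniz_partial \<longlonglongrightarrow> L"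
    using leibniz_partial_convergent by (auto simp: convergent_def)
  define f where "f R = (-1)^n * (leibniz_partial (R - 2*n) - leibniz_partial (Suc R)) + 1 / nth_odd n"
    for R
  have "eventually (\<lambda>R. f R = kernel_alt_row n R) sequentially"
    using eventually_ge_at_top[of "2*n"]
  proof eventually_elim
    case (elim R)
    then have "nat \<bar>int (R - n) - int n\<bar> = R - 2*n" "n + (R - n) + 1 = Suc R" by auto
    then show ?case using kernel_alt_row_closed[of n "R - n"] elim by (simp add: f_def)
  qed
  moreover have "(\<lambda>R. leibniz_partial (R - 2*n)) \<longlonglongrightarrow> L"
    by (rule LIMSEQ_offset[where k="2*n"]) (simp add: L)
  then have "f \<longlonglongrightarrow> (-1)^n * (L - L) + 1 / nth_odd n"
    unfolding f_def by (intro tendsto_intros LIMSEQ_Suc L)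
  ultimately show ?thesis using tendsto_cong by force
qed

lemma abs_kernel_alt_row_le: "\<bar>kernel_alt_row n R\<bar> \<le> 3"
proof (cases "n \<le> R")
  case True
  define A where "A = leibniz_partial (nat \<bar>int (R-n) - int n\<bar>)"
  define B where "B = leibniz_partial (n + (R-n) + 1)"
  have "kernel_alt_row n R = kernel_alt_row n (n + (R - n))" using True by simp
  also have "\<dots> = (-1)^n * (A - B) + 1 / nth_odd n"
    unfolding A_def B_def by (rule kernel_alt_row_closed)
  finally have "\<bar>kernel_alt_row n R\<bar> \<le> \<bar>A - B\<bar> + \<bar>1 / nth_odd n\<bar>"
    using abs_triangle_ineq[of "(-1)^n * (A - B)" "1 / nth_odd n"]
    by (simp add: abs_mult power_abs del: abs_divide)
  moreover have "\<bar>A - B\<bar> \<le> 2"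
    using abs_leibniz_partial_le[of "nat \<bar>int (R-n) - int n\<bar>"]
      abs_leibniz_partial_le[of "n + (R-n) + 1"] abs_triangle_ineq4[of A B]
    unfolding A_def B_def by linarith
  moreover have "\<bar>1 / nth_odd n\<bar> \<le> 1" using nth_odd_ge_1[of n] by simp
  ultimately show ?thesis by linarith
qed (simp add: kernel_alt_row_def)

lemma kernel_col_closed:
  "kernel_col m (m + t) = odd_harmonic (m + t + 1) + odd_harmonic_int (int t - int m - 1)"
proof (induction t)
  case 0
  have "odd_harmonic_int (- int m - 1) = - odd_harmonic (m + 1)"
    by (simp add: odd_harmonic_int_def nat_add_distrib)
  then show ?case by (simp add: kernel_col_def)
next
  case (Suc t)
  have "kernel_col m (m + Suc t) = kernel_col m (m + t) + pair_kernel t m"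
    by (simp add: kernel_col_def)
  moreover have "odd_harmonic (m + Suc t + 1) - odd_harmonic (m + t + 1) = 1 / (nth_even m + nth_odd t)"
    by (simp add: odd_harmonic_def nth_even_plus_nth_odd add_ac)
  moreover have "\<bar>nth_even m - nth_odd t\<bar> = \<bar>2 * real_of_int (int t - int m - 1) + 1\<bar>"
    by (simp add: nth_even_minus_nth_odd abs_minus_commute algebra_simps)
  then have "odd_harmonic_int (int (Suc t) - int m - 1) - odd_harmonic_int (int t - int m - 1) =
      1 / \<bar>nth_even m - nth_odd t\<bar>"
    using odd_harmonic_int_step[of "int t - int m - 1"] by (simp add: algebra_simps)
  ultimately show ?case using Suc.IH by (simp add: pair_kernel_def algebra_simps)
qed

text \<open>The column sums of pair_kernel grow like a logarithm; subtracting the matching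
  partial sum of odd reciprocals leaves a defect that tends to zero.\<close>
definition col_defect :: "nat \<Rightarrow> nat \<Rightarrow> real" where
  "col_defect m R = odd_harmonic (R - m) - kernel_col m R / 2"

lemma col_defect_far:
  assumes "2*m + 1 \<le> R"
  shows "col_defect m R =
    ((odd_harmonic ((R - 2*m - 1) + (m + 1)) - odd_harmonic (R - 2*m - 1))
      - (odd_harmonic ((R - m) + (m + 1)) - odd_harmonic (R - m))) / 2"
proof -
  have "kernel_col m R = kernel_col m (m + (R - m))" using assms by simp
  also have "\<dots> = odd_harmonic (m + (R - m) + 1) + odd_harmonic_int (int (R - m) - int m - 1)"
    by (rule kernel_col_closed)
  also have "odd_harmonic_int (int (R - m) - int m - 1) = odd_harmonic (R - 2*m - 1)"
  proof -
    have "0 \<le> int (R - m) - int m - 1" "nat (int (R - m) - int m - 1) = R - 2*m - 1"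
      using assms by auto
    then show ?thesis by (simp only: odd_harmonic_int_def if_True)
  qed
  finally have "kernel_col m R = odd_harmonic (m + (R - m) + 1) + odd_harmonic (R - 2*m - 1)" .
  moreover have "(R - 2*m - 1) + (m + 1) = R - m" "(R - m) + (m + 1) = m + (R - m) + 1"
    "Suc (R - Suc m) = R - m"
    using assms by auto
  ultimately show ?thesis by (simp add: col_defect_def field_simps)
qed

lemma col_defect_near:
  assumes "m < R" "R < 2*m + 1"
  shows "col_defect m R = odd_harmonic (R - m)
    - (odd_harmonic ((2*m + 1 - R) + (2*R - 2*m)) - odd_harmonic (2*m + 1 - R)) / 2"
proof -
  have "kernel_col m R = kernel_col m (m + (R - m))" using assms by simp
  also have "\<dots> = odd_harmonic (m + (R - m) + 1) + odd_harmonic_int (int (R - m) - int m - 1)"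
    by (rule kernel_col_closed)
  also have "odd_harmonic_int (int (R - m) - int m - 1) = - odd_harmonic (2*m + 1 - R)"
  proof -
    have "\<not> 0 \<le> int (R - m) - int m - 1" "nat (- (int (R - m) - int m - 1)) = 2*m + 1 - R"
      using assms by auto
    then show ?thesis by (simp only: odd_harmonic_int_def if_False)
  qed
  also have "m + (R - m) + 1 = (2*m + 1 - R) + (2*R - 2*m)" using assms by auto
  finally show ?thesis by (simp add: col_defect_def)
qed

lemma col_defect_tendsto: "(\<lambda>R. col_defect m R) \<longlonglongrightarrow> 0"
proof (rule Lim_null_comparison)
  define u where "u R = real (m + 1) / nth_odd (R - 2*m - 1)" for R
  show "eventually (\<lambda>R. norm (col_defect m R) \<le> u R) sequentially"
    using eventually_ge_at_top[of "2*m + 1"]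
  proof eventually_elim
    case (elim R)
    define X where "X = odd_harmonic ((R - 2*m - 1) + (m + 1)) - odd_harmonic (R - 2*m - 1)"
    define Y where "Y = odd_harmonic ((R - m) + (m + 1)) - odd_harmonic (R - m)"
    have "0 \<le> X" "0 \<le> Y"
      unfolding X_def Y_def diff_ge_0_iff_ge by (rule odd_harmonic_le_add)+
    moreover have "X \<le> u R"
      unfolding X_def u_def by (rule odd_harmonic_add_le_div)
    moreover have "Y \<le> real (m + 1) / nth_odd (R - m)"
      unfolding Y_def by (rule odd_harmonic_add_le_div)
    moreover have "real (m + 1) / nth_odd (R - m) \<le> u R"
      unfolding u_def nth_odd_def using elim by (intro divide_left_mono) auto
    moreover have "col_defect m R = (X - Y) / 2"
      using col_defect_far[OF elim] by (simp add: X_def Y_def)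
    ultimately show ?case by simp
  qed
  have "R + (2*m + 1) - 2*m - 1 = R" for R by simp
  then have "(\<lambda>R. u (R + (2*m + 1))) = (\<lambda>R. real (m + 1) / (2 * real R + 1))"
    unfolding u_def nth_odd_def by (simp only:)
  moreover have "(\<lambda>R. real (m + 1) / (2 * real R + 1)) \<longlonglongrightarrow> 0" by real_asymp
  ultimately show "u \<longlonglongrightarrow> 0"
    using LIMSEQ_offset[of u "2*m + 1"] by simp
qed

lemma odd_harmonic_double_le_sqrt: "odd_harmonic (2*m + 2) \<le> 4 * sqrt (real (Suc m))"
proof -
  have "odd_harmonic (2*m + 2) \<le> 2 * sqrt (2 * real (Suc m))"
    using odd_harmonic_le_sqrt[of "2*m + 2"] by (simp add: algebra_simps)
  also have "\<dots> = 2 * sqrt 2 * sqrt (real (Suc m))"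
    by (simp only: real_sqrt_mult mult.assoc)
  also have "\<dots> \<le> 4 * sqrt (real (Suc m))"
    using real_sqrt_le_mono[of 2 4] by (intro mult_right_mono) auto
  finally show ?thesis .
qed

lemma abs_col_defect_le: "\<bar>col_defect m R\<bar> \<le> 6 * sqrt (real (Suc m))"
proof -
  have H: "odd_harmonic (m + 1) \<le> 2 * sqrt (real (Suc m))"
    using odd_harmonic_le_sqrt[of "m + 1"] by simp
  consider "R \<le> m" | "m < R" "R < 2*m + 1" | "2*m + 1 \<le> R" by linarith
  then show ?thesis
  proof cases
    case 1
    then show ?thesis by (simp add: col_defect_def kernel_col_def odd_harmonic_def)
  next
    case 2
    define Z where "Z = odd_harmonic ((2*m + 1 - R) + (2*R - 2*m)) - odd_harmonic (2*m + 1 - R)"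
    have "odd_harmonic (2*R - 2*m) \<le> odd_harmonic (2*m + 2)"
      using 2 by (intro odd_harmonic_mono) auto
    also have "\<dots> \<le> 4 * sqrt (real (Suc m))"
      by (rule odd_harmonic_double_le_sqrt)
    finally have "0 \<le> Z" "Z \<le> 4 * sqrt (real (Suc m))"
      using odd_harmonic_add_le[of "2*m + 1 - R" "2*R - 2*m"]
        odd_harmonic_le_add[of "2*m + 1 - R" "2*R - 2*m"]
      by (simp_all only: Z_def diff_ge_0_iff_ge)
    moreover have "0 \<le> odd_harmonic (R - m)" "odd_harmonic (R - m) \<le> odd_harmonic (m + 1)"
      using 2 by (simp_all add: odd_harmonic_nonneg odd_harmonic_mono)
    moreover have "col_defect m R = odd_harmonic (R - m) - Z / 2"
      using col_defect_near[OF 2] by (simp add: Z_def)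
    ultimately show ?thesis using H by (simp add: abs_le_iff)
  next
    case 3
    define X where "X = odd_harmonic ((R - 2*m - 1) + (m + 1)) - odd_harmonic (R - 2*m - 1)"
    define Y where "Y = odd_harmonic ((R - m) + (m + 1)) - odd_harmonic (R - m)"
    have "0 \<le> X" "X \<le> odd_harmonic (m + 1)" "0 \<le> Y" "Y \<le> odd_harmonic (m + 1)"
      unfolding X_def Y_def diff_ge_0_iff_ge by (rule odd_harmonic_le_add odd_harmonic_add_le)+
    moreover have "col_defect m R = (X - Y) / 2"
      using col_defect_far[OF 3] by (simp add: X_def Y_def)
    ultimately show ?thesis using H by simp
  qed
qed

section \<open>Triangular partial sums\<close>

definition tri_sum :: "nat \<Rightarrow> (nat \<Rightarrow> nat \<Rightarrow> 'a::comm_monoid_add) \<Rightarrow> 'a" where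
  "tri_sum R f = (\<Sum>m<R. \<Sum>n<R-m. f n m)"

lemma tri_sum_swap: "tri_sum R f = (\<Sum>n<R. \<Sum>m<R-n. f n m)"
proof -
  have "{n \<in> {..<R}. n + m < R} = {..<R-m}" for m by auto
  moreover have "{m \<in> {..<R}. n + m < R} = {..<R-n}" for n by auto
  ultimately show ?thesis
    unfolding tri_sum_def using sum.swap_restrict[of "{..<R}" "{..<R}" "\<lambda>m n. f n m" "\<lambda>m n. n + m < R"]
    by (simp add: add.commute)
qed

lemma tri_sum_diff: "tri_sum R (\<lambda>n m. f n m - g n m) = tri_sum R f - tri_sum R (g :: _ \<Rightarrow> _ \<Rightarrow> 'a::ab_group_add)"
  by (simp add: tri_sum_def sum_subtractf)

lemma tri_sum_divide: "tri_sum R (\<lambda>n m. f n m / c) = tri_sum R (f :: _ \<Rightarrow> _ \<Rightarrow> 'a::field) / c"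
  by (simp add: tri_sum_def sum_divide_distrib)

lemma tri_sum_sum: "tri_sum R (\<lambda>n m. \<Sum>j\<in>J. f j n m) = (\<Sum>j\<in>J. tri_sum R (f j))"
  unfolding tri_sum_def by (subst sum.swap) (simp add: sum.swap[of _ J])

definition dirichlet_lambda :: "nat \<Rightarrow> real" where
  "dirichlet_lambda s = (\<Sum>n. 1 / nth_odd n ^ s)"

text \<open>For e \<ge> 2 this is the sum of (-1)^m / nth_even m ^ e; at e = 0 the convention
  zetabar 0 = 1/2 makes it 1/2, the weight of the diagonal n = m of the double series.\<close>
definition alt_even_zeta :: "nat \<Rightarrow> real" where
  "alt_even_zeta e = zetabar e / 2 ^ e"

definition alt_even_partial :: "nat \<Rightarrow> nat \<Rightarrow> real" where
  "alt_even_partial e x = (\<Sum>m<x. (-1)^m / nth_even m ^ e)"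

lemma summable_inverse_Suc_power: "2 \<le> s \<Longrightarrow> summable (\<lambda>n. 1 / real (Suc n) ^ s)"
  using summable_Suc_iff[of "\<lambda>n. inverse (real n ^ s)"] inverse_power_summable[of s]
  by (simp add: inverse_eq_divide)

lemma summable_inverse_nth_odd_power: "2 \<le> s \<Longrightarrow> summable (\<lambda>n. 1 / nth_odd n ^ s)"
  by (rule summable_comparison_test'[OF summable_inverse_Suc_power, of s 0])
     (auto simp: nth_odd_def intro!: divide_left_mono power_mono)

lemma inverse_nth_odd_power_le: "2 \<le> i \<Longrightarrow> 1 / nth_odd n ^ i \<le> 1 / nth_odd n ^ 2"
  using nth_odd_ge_1[of n] by (intro divide_left_mono power_increasing) auto

lemma inverse_nth_even_power_le: "2 \<le> i \<Longrightarrow> 1 / nth_even n ^ i \<le> 1 / nth_even n ^ 2"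
  using nth_even_ge_2[of n] by (intro divide_left_mono power_increasing) auto

lemma alt_even_zeta_sums:
  assumes "2 \<le> e"
  shows "(\<lambda>m. (-1)^m / nth_even m ^ e) sums alt_even_zeta e"
proof -
  have "summable (\<lambda>m. (-1)^m / real (Suc m) ^ e)"
    by (rule summable_comparison_test'[OF summable_inverse_Suc_power[OF assms], of 0])
       (simp add: power_abs)
  then have "(\<lambda>m. (-1)^m / real (Suc m) ^ e) sums zetabar e"
    using assms by (simp add: zetabar_def summable_sums)
  then have "(\<lambda>m. (-1)^m / real (Suc m) ^ e / 2 ^ e) sums alt_even_zeta e"
    unfolding alt_even_zeta_def by (rule sums_divide)
  moreover have "(-1)^m / real (Suc m) ^ e / 2 ^ e = (-1)^m / nth_even m ^ e" for m
    by (simp add: nth_even_def power_mult_distrib[symmetric] algebra_simps)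
  ultimately show ?thesis by simp
qed

lemma alt_even_partial_tendsto: "2 \<le> e \<Longrightarrow> alt_even_partial e \<longlonglongrightarrow> alt_even_zeta e"
  unfolding alt_even_partial_def[abs_def] by (rule sums_def[THEN iffD1, OF alt_even_zeta_sums])

lemma abs_alt_even_partial_le: "\<bar>alt_even_partial e x\<bar> \<le> 1"
proof -
  have "\<bar>\<Sum>m<x. (-1)^m * (1 / nth_even m ^ e)\<bar> \<le> 1 / nth_even 0 ^ e"
    by (rule abs_alternating_sum_le)
       (auto simp: nth_even_def intro!: divide_left_mono power_mono)
  then have "\<bar>alt_even_partial e x\<bar> \<le> 1 / nth_even 0 ^ e"
    by (simp add: alt_even_partial_def)
  moreover have "1 / nth_even 0 ^ e \<le> 1"
    using nth_even_ge_2[of 0] by (simp add: one_le_power)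
  ultimately show ?thesis by linarith
qed

lemma tendsto_weighted_alt_even_partial:
  assumes "2 \<le> i" "2 \<le> e"
  shows "(\<lambda>R. \<Sum>n<R. 1 / nth_odd n ^ i * alt_even_partial e (R - n))
    \<longlonglongrightarrow> dirichlet_lambda i * alt_even_zeta e"
proof -
  have "(\<lambda>R. \<Sum>n<R. 1 / nth_odd n ^ i * alt_even_partial e (R - n))
      \<longlonglongrightarrow> (\<Sum>n. 1 / nth_odd n ^ i * alt_even_zeta e)"
  proof (rule tannery_lessThan)
    show "(\<lambda>R. 1 / nth_odd n ^ i * alt_even_partial e (R - n)) \<longlonglongrightarrow> 1 / nth_odd n ^ i * alt_even_zeta e"
      for n
    proof (intro tendsto_mult tendsto_const)
      show "(\<lambda>R. alt_even_partial e (R - n)) \<longlonglongrightarrow> alt_even_zeta e"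
        by (rule LIMSEQ_offset[where k=n]) (simp add: alt_even_partial_tendsto assms)
    qed
    show "\<bar>1 / nth_odd n ^ i * alt_even_partial e (R - n)\<bar> \<le> 1 / nth_odd n ^ 2" for n R
    proof -
      have "1 / nth_odd n ^ i * \<bar>alt_even_partial e (R - n)\<bar> \<le> 1 / nth_odd n ^ 2 * 1"
        by (rule mult_mono[OF inverse_nth_odd_power_le[OF assms(1)] abs_alt_even_partial_le]) auto
      then show ?thesis by (simp add: abs_mult less_imp_le)
    qed
  qed (rule summable_inverse_nth_odd_power, simp)
  then show ?thesis
    unfolding dirichlet_lambda_def
    using suminf_mult2[OF summable_inverse_nth_odd_power[OF assms(1)]] by simp
qed

definition triangle_partial :: "nat \<Rightarrow> nat \<Rightarrow> real" where
  "triangle_partial k R = tri_sum R (\<lambda>n m. (-1)^m * (if n \<le> m then cross_sum k n m else 0))"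

lemma triangle_partial_minus_odd:
  "triangle_partial k R - tri_sum R (\<lambda>n m. (-1)^m * cross_sum_odd k n m) =
     ((\<Sum>n<R. 1 / nth_odd n ^ (2*k) * kernel_alt_row n R)
      - (\<Sum>m<R. (-1)^m / nth_even m ^ (2*k) * kernel_col m R)) / 2"
proof -
  have "triangle_partial k R - tri_sum R (\<lambda>n m. (-1)^m * cross_sum_odd k n m)
      = tri_sum R (\<lambda>n m. (-1)^m * ((if n \<le> m then cross_sum k n m else 0) - cross_sum_odd k n m))"
    unfolding triangle_partial_def tri_sum_diff[symmetric] by (simp add: algebra_simps)
  also have "\<dots> = tri_sum R (\<lambda>n m. (1 / nth_odd n ^ (2*k) * ((-1)^m * pair_kernel n m)
      - (-1)^m / nth_even m ^ (2*k) * pair_kernel n m) / 2)"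
    unfolding cross_sum_minus_odd by (simp add: algebra_simps)
  also have "\<dots> = (tri_sum R (\<lambda>n m. 1 / nth_odd n ^ (2*k) * ((-1)^m * pair_kernel n m))
      - tri_sum R (\<lambda>n m. (-1)^m / nth_even m ^ (2*k) * pair_kernel n m)) / 2"
    by (subst tri_sum_divide, subst tri_sum_diff, rule refl)
  also have "tri_sum R (\<lambda>n m. 1 / nth_odd n ^ (2*k) * ((-1)^m * pair_kernel n m)) =
      (\<Sum>n<R. 1 / nth_odd n ^ (2*k) * kernel_alt_row n R)"
    unfolding tri_sum_swap kernel_alt_row_def by (simp add: sum_distrib_left)
  also have "tri_sum R (\<lambda>n m. (-1)^m / nth_even m ^ (2*k) * pair_kernel n m) =
      (\<Sum>m<R. (-1)^m / nth_even m ^ (2*k) * kernel_col m R)"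
    unfolding tri_sum_def kernel_col_def by (simp add: sum_distrib_left)
  finally show ?thesis .
qed

text \<open>The term j = 0 of the odd part is the harmonic-like one that col_defect compensates.\<close>
lemma tri_sum_odd_part:
  assumes "1 \<le> k"
  shows "tri_sum R (\<lambda>n m. (-1)^m * cross_sum_odd k n m) =
      (\<Sum>m<R. (-1)^m / nth_even m ^ (2*k) * odd_harmonic (R - m))
    + (\<Sum>j\<in>{1..<k}. \<Sum>n<R. 1 / nth_odd n ^ (2*j+1) * alt_even_partial (2*k - 2*j) (R - n))"
proof -
  have "tri_sum R (\<lambda>n m. (-1)^m * cross_sum_odd k n m) =
      (\<Sum>j<k. tri_sum R (\<lambda>n m. (-1)^m * cross_term k (2*j+1) n m))"
    unfolding cross_sum_odd_def sum_distrib_left by (rule tri_sum_sum)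
  also have "\<dots> = tri_sum R (\<lambda>n m. (-1)^m * cross_term k 1 n m)
      + (\<Sum>j\<in>{1..<k}. tri_sum R (\<lambda>n m. (-1)^m * cross_term k (2*j+1) n m))"
    using assms by (simp add: lessThan_atLeast0 sum.atLeast_Suc_lessThan)
  also have "tri_sum R (\<lambda>n m. (-1)^m * cross_term k 1 n m) =
      (\<Sum>m<R. (-1)^m / nth_even m ^ (2*k) * odd_harmonic (R - m))"
    unfolding tri_sum_def odd_harmonic_def
    by (simp add: cross_term_def sum_distrib_left sum_divide_distrib mult.commute)
  also have "(\<Sum>j\<in>{1..<k}. tri_sum R (\<lambda>n m. (-1)^m * cross_term k (2*j+1) n m)) =
      (\<Sum>j\<in>{1..<k}. \<Sum>n<R. 1 / nth_odd n ^ (2*j+1) * alt_even_partial (2*k - 2*j) (R - n))"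
    unfolding tri_sum_swap alt_even_partial_def
    by (simp add: cross_term_def sum_distrib_left)
  finally show ?thesis .
qed

lemma triangle_partial_decomp:
  assumes "1 \<le> k"
  shows "triangle_partial k R =
      (\<Sum>n<R. 1 / nth_odd n ^ (2*k) * kernel_alt_row n R) / 2
    + (\<Sum>m<R. (-1)^m / nth_even m ^ (2*k) * col_defect m R)
    + (\<Sum>j\<in>{1..<k}. \<Sum>n<R. 1 / nth_odd n ^ (2*j+1) * alt_even_partial (2*k - 2*j) (R - n))"
proof -
  have "(\<Sum>m<R. (-1)^m / nth_even m ^ (2*k) * odd_harmonic (R - m))
      - (\<Sum>m<R. (-1)^m / nth_even m ^ (2*k) * kernel_col m R) / 2
      = (\<Sum>m<R. (-1)^m / nth_even m ^ (2*k) * col_defect m R)"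
    unfolding col_defect_def sum_divide_distrib sum_subtractf[symmetric]
    by (intro sum.cong refl) (simp only: right_diff_distrib times_divide_eq_right)
  then show ?thesis
    using triangle_partial_minus_odd[of k R] tri_sum_odd_part[OF assms, of R]
    by (simp add: algebra_simps)
qed

lemma summable_sqrt_Suc_div_square: "summable (\<lambda>m. sqrt (real (Suc m)) / real (Suc m) ^ 2)"
proof -
  have "summable (\<lambda>n. real (Suc n) powr (-3/2))"
    using summable_Suc_iff[of "\<lambda>n. real n powr (-3/2)"] by (simp add: summable_real_powr_iff)
  moreover have "sqrt (real (Suc m)) / real (Suc m) ^ 2 = real (Suc m) powr (-3/2)" for m
  proof -
    have "sqrt (real (Suc m)) / real (Suc m) ^ 2 = real (Suc m) powr (1/2) / real (Suc m) powr 2"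
      by (simp add: powr_half_sqrt powr_realpow)
    also have "\<dots> = real (Suc m) powr (1/2 - 2)"
      by (rule powr_diff[symmetric])
    finally show ?thesis by simp
  qed
  ultimately show ?thesis by simp
qed

lemma tendsto_weighted_kernel_alt_row:
  assumes "1 \<le> k"
  shows "(\<lambda>R. \<Sum>n<R. 1 / nth_odd n ^ (2*k) * kernel_alt_row n R) \<longlonglongrightarrow> dirichlet_lambda (2*k+1)"
proof -
  have "(\<lambda>R. \<Sum>n<R. 1 / nth_odd n ^ (2*k) * kernel_alt_row n R)
      \<longlonglongrightarrow> (\<Sum>n. 1 / nth_odd n ^ (2*k) * (1 / nth_odd n))"
  proof (rule tannery_lessThan)
    show "(\<lambda>R. 1 / nth_odd n ^ (2*k) * kernel_alt_row n R) \<longlonglongrightarrow> 1 / nth_odd n ^ (2*k) * (1 / nth_odd n)"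
      for n by (intro tendsto_mult tendsto_const kernel_alt_row_tendsto)
    show "\<bar>1 / nth_odd n ^ (2*k) * kernel_alt_row n R\<bar> \<le> 3 * (1 / nth_odd n ^ 2)" for n R
    proof -
      have "1 / nth_odd n ^ (2*k) * \<bar>kernel_alt_row n R\<bar> \<le> 1 / nth_odd n ^ 2 * 3"
        using assms
        by (intro mult_mono inverse_nth_odd_power_le abs_kernel_alt_row_le) auto
      then show ?thesis by (simp add: abs_mult less_imp_le mult.commute)
    qed
    show "summable (\<lambda>n. 3 * (1 / nth_odd n ^ 2))"
      by (intro summable_mult summable_inverse_nth_odd_power) simp
  qed
  then show ?thesis by (simp add: dirichlet_lambda_def field_simps)
qed

lemma tendsto_weighted_col_defect:
  assumes "1 \<le> k"
  shows "(\<lambda>R. \<Sum>m<R. (-1)^m / nth_even m ^ (2*k) * col_defect m R) \<longlonglongrightarrow> 0"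
proof -
  have "(\<lambda>R. \<Sum>m<R. (-1)^m / nth_even m ^ (2*k) * col_defect m R) \<longlonglongrightarrow> (\<Sum>m. 0)"
  proof (rule tannery_lessThan)
    show "(\<lambda>R. (-1)^m / nth_even m ^ (2*k) * col_defect m R) \<longlonglongrightarrow> 0" for m
      by (rule tendsto_mult_right_zero) (rule col_defect_tendsto)
    show "\<bar>(-1)^m / nth_even m ^ (2*k) * col_defect m R\<bar>
        \<le> 3/2 * (sqrt (real (Suc m)) / real (Suc m) ^ 2)" for m R
    proof -
      have "1 / nth_even m ^ (2*k) * \<bar>col_defect m R\<bar> \<le> 1 / nth_even m ^ 2 * (6 * sqrt (real (Suc m)))"
        using assms
        by (intro mult_mono inverse_nth_even_power_le abs_col_defect_le) auto
      moreover have "nth_even m ^ 2 = 4 * real (Suc m) ^ 2"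
        by (simp add: nth_even_def power2_eq_square algebra_simps)
      ultimately show ?thesis by (simp add: abs_mult power_abs less_imp_le)
    qed
    show "summable (\<lambda>m. 3/2 * (sqrt (real (Suc m)) / real (Suc m) ^ 2))"
      by (intro summable_mult summable_sqrt_Suc_div_square)
  qed
  then show ?thesis by simp
qed

lemma triangle_partial_tendsto:
  assumes "1 \<le> k"
  shows "(\<lambda>R. triangle_partial k R)
    \<longlonglongrightarrow> (\<Sum>j=1..k. dirichlet_lambda (2*j+1) * alt_even_zeta (2*k - 2*j))"
proof -
  have "(\<lambda>R. triangle_partial k R) \<longlonglongrightarrow> dirichlet_lambda (2*k+1) / 2 + 0
      + (\<Sum>j\<in>{1..<k}. dirichlet_lambda (2*j+1) * alt_even_zeta (2*k - 2*j))"
    unfolding triangle_partial_decomp[OF assms]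
    by (intro tendsto_add tendsto_divide tendsto_sum tendsto_weighted_kernel_alt_row
        tendsto_weighted_col_defect tendsto_weighted_alt_even_partial tendsto_const assms) auto
  moreover have "{1..k} = insert k {1..<k}" using assms by auto
  ultimately show ?thesis by (simp add: alt_even_zeta_def zetabar_def)
qed

section \<open>The double series\<close>

definition row_total :: "nat \<Rightarrow> nat \<Rightarrow> real" where
  "row_total k m = (\<Sum>n<Suc m. cross_sum k n m)"

definition W_series :: "nat \<Rightarrow> real" where
  "W_series k = (\<Sum>m. (-1)^m * row_total k m)"

lemma row_total_nonneg: "0 \<le> row_total k m"
  unfolding row_total_def by (intro sum_nonneg cross_sum_nonneg)

lemma sum_lessThan_if_le:
  "(\<Sum>n<L. if n \<le> m then f n else 0) = (\<Sum>n<min L (Suc m). f n :: real)"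
  by (simp add: sum.If_cases) (rule sum.cong, auto)

text \<open>The rows m < h of the triangle are complete; the remaining rows form an alternating
  sum of decreasing terms and are therefore bounded by the first of them.\<close>
lemma triangle_partial_approx:
  fixes k R :: nat
  defines "h \<equiv> Suc R div 2"
  shows "\<bar>triangle_partial k R - (\<Sum>m<h. (-1)^m * row_total k m)\<bar> \<le> row_total k h"
proof -
  define c where "c m = (\<Sum>n<R-m. cross_sum k n m)" for m
  have hR: "h \<le> R" unfolding h_def by linarith
  have row: "(\<Sum>n<R-m. if n \<le> m then cross_sum k n m else 0)
      = (if m < h then row_total k m else c m)" for m
  proof -
    have "min (R - m) (Suc m) = (if m < h then Suc m else R - m)"
      unfolding h_def by auto
    then show ?thesis unfolding sum_lessThan_if_le row_total_def c_def by simp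
  qed
  have "triangle_partial k R = (\<Sum>m<R. (-1)^m * (if m < h then row_total k m else c m))"
    unfolding triangle_partial_def tri_sum_def row[symmetric] by (simp add: sum_distrib_left)
  also have "\<dots> = (\<Sum>m<h. (-1)^m * row_total k m) + (\<Sum>m\<in>{h..<R}. (-1)^m * c m)"
    unfolding lessThan_atLeast0 sum.atLeastLessThan_concat[OF le0 hR, symmetric]
    by (intro arg_cong2[where f="(+)"] sum.cong) auto
  finally have split: "triangle_partial k R - (\<Sum>m<h. (-1)^m * row_total k m)
      = (\<Sum>m\<in>{h..<R}. (-1)^m * c m)" by simp
  have c_antimono: "c (Suc m) \<le> c m" for m
  proof -
    have "c (Suc m) \<le> (\<Sum>n<R - Suc m. cross_sum k n m)"
      unfolding c_def by (intro sum_mono cross_sum_antimono)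
    also have "\<dots> \<le> c m"
      unfolding c_def by (intro sum_mono2) (auto simp: cross_sum_nonneg)
    finally show ?thesis .
  qed
  have c_nonneg: "0 \<le> c m" for m unfolding c_def by (intro sum_nonneg cross_sum_nonneg)
  have "\<bar>\<Sum>m\<in>{h..<R}. (-1)^m * c m\<bar> \<le> c h"
    by (rule abs_alternating_sum_atLeastLessThan_le) (auto intro: c_antimono c_nonneg)
  also have "c h \<le> row_total k h"
  proof -
    have "R - h \<le> Suc h" unfolding h_def by auto
    then show ?thesis
      unfolding c_def row_total_def by (intro sum_mono2) (auto simp: cross_sum_nonneg)
  qed
  finally show ?thesis unfolding split .
qed

lemma triangle_partial_tendsto_W_series:
  assumes "summable (\<lambda>m. (-1)^m * row_total k m)"
  shows "(\<lambda>R. triangle_partial k R) \<longlonglongrightarrow> W_series k"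
proof -
  define h where "h R = Suc R div 2" for R
  have h: "filterlim h at_top sequentially"
    unfolding filterlim_at_top h_def
  proof
    fix Z :: nat
    show "eventually (\<lambda>R. Z \<le> Suc R div 2) sequentially"
      using eventually_ge_at_top[of "2*Z"] by eventually_elim auto
  qed
  have "row_total k \<longlonglongrightarrow> 0"
    using tendsto_rabs_zero[OF summable_LIMSEQ_zero[OF assms]]
    by (simp add: abs_mult power_abs row_total_nonneg)
  then have "(\<lambda>R. row_total k (h R)) \<longlonglongrightarrow> 0"
    using h by (rule filterlim_compose)
  then have "(\<lambda>R. triangle_partial k R - (\<Sum>m<h R. (-1)^m * row_total k m)) \<longlonglongrightarrow> 0"
    by (rule Lim_null_comparison[rotated]) (simp add: h_def triangle_partial_approx)
  moreover have "(\<lambda>R. \<Sum>m<h R. (-1)^m * row_total k m) \<longlonglongrightarrow> W_series k"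
    unfolding W_series_def using summable_LIMSEQ[OF assms] h by (rule filterlim_compose)
  ultimately show ?thesis
    using tendsto_add by fastforce
qed

definition Tbar_term :: "nat \<Rightarrow> nat \<Rightarrow> nat \<Rightarrow> real" where
  "Tbar_term k i m = (-1)^m * (\<Sum>n<Suc m. cross_term k i n m)"

lemma summable_Tbar_term_below:
  assumes "1 \<le> i" "i < 2*k"
  shows "summable (Tbar_term k i)"
proof (rule summable_comparison_test'[where N=0])
  show "summable (\<lambda>m. 1/2 * (sqrt (real (Suc m)) / real (Suc m) ^ 2))"
    by (intro summable_mult summable_sqrt_Suc_div_square)
  fix m :: nat
  have "cross_term k i n m \<le> 1 / (nth_odd n * nth_even m ^ 2)" for n
  proof -
    have "nth_odd n ^ 1 \<le> nth_odd n ^ i" "nth_even m ^ 2 \<le> nth_even m ^ (Suc (2*k) - i)"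
      using assms nth_odd_ge_1[of n] nth_even_ge_2[of m] by (intro power_increasing; simp)+
    then have "nth_odd n * nth_even m ^ 2 \<le> nth_odd n ^ i * nth_even m ^ (Suc (2*k) - i)"
      by (intro mult_mono) (auto simp: less_imp_le)
    then show ?thesis
      unfolding cross_term_def
      by (rule divide_left_mono) (simp, intro mult_pos_pos zero_less_power nth_odd_pos nth_even_pos)
  qed
  then have "norm (Tbar_term k i m) \<le> (\<Sum>n<Suc m. 1 / (nth_odd n * nth_even m ^ 2))"
    unfolding Tbar_term_def
    by (simp add: abs_mult power_abs sum_nonneg cross_term_nonneg sum_mono del: sum.lessThan_Suc)
  also have "\<dots> = odd_harmonic (Suc m) * (1 / nth_even m ^ 2)"
    unfolding odd_harmonic_def sum_distrib_right by (simp del: sum.lessThan_Suc)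
  also have "\<dots> \<le> 2 * sqrt (real (Suc m)) * (1 / nth_even m ^ 2)"
    by (intro mult_right_mono odd_harmonic_le_sqrt) simp
  also have "nth_even m ^ 2 = 4 * real (Suc m) ^ 2"
    by (simp add: nth_even_def power2_eq_square algebra_simps)
  finally show "norm (Tbar_term k i m) \<le> 1/2 * (sqrt (real (Suc m)) / real (Suc m) ^ 2)"
    by simp
qed

lemma one_le_sum_inverse_nth_odd_power: "1 \<le> (\<Sum>n<Suc m. 1 / nth_odd n ^ s)"
  using member_le_sum[of 0 "{..<Suc m}" "\<lambda>n. 1 / nth_odd n ^ s"]
  by (simp add: nth_odd_def less_imp_le)

lemma sum_inverse_nth_odd_power_div_antimono:
  assumes "1 \<le> s"
  shows "(\<Sum>n<Suc (Suc m). 1 / nth_odd n ^ s) / nth_even (Suc m)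
    \<le> (\<Sum>n<Suc m. 1 / nth_odd n ^ s) / nth_even m"
proof -
  define S where "S = (\<Sum>n<Suc m. 1 / nth_odd n ^ s)"
  define t where "t = 1 / nth_odd (Suc m) ^ s"
  have "t \<le> 1 / nth_odd (Suc m)"
    unfolding t_def using nth_odd_ge_1[of "Suc m"] assms
    by (intro divide_left_mono power_increasing[where n=1, simplified]) auto
  also have "\<dots> \<le> 2 / nth_even m"
    by (simp add: nth_odd_def nth_even_def field_simps)
  finally have "nth_even m * t \<le> 2" by (simp add: field_simps)
  then have "nth_even m * t \<le> 2 * S"
    using one_le_sum_inverse_nth_odd_power[where m=m and s=s] unfolding S_def by linarith
  moreover have "nth_even (Suc m) = nth_even m + 2" by (simp add: nth_even_def)
  ultimately have "nth_even m * (S + t) \<le> nth_even (Suc m) * S"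
    by (simp add: algebra_simps)
  then show ?thesis by (simp add: S_def t_def field_simps)
qed

text \<open>For i = 2k the row sums decay only like 1/m, so summability rests on the sign
  alternation (Leibniz' test).\<close>
lemma summable_Tbar_term_top:
  assumes "1 \<le> k"
  shows "summable (Tbar_term k (2*k))"
proof -
  define S where "S m = (\<Sum>n<Suc m. 1 / nth_odd n ^ (2*k))" for m
  have S_ge_1: "1 \<le> S m" for m
    unfolding S_def by (rule one_le_sum_inverse_nth_odd_power)
  then have S_abs: "\<bar>S m\<bar> = S m" for m
    by (rule abs_of_nonneg[OF order_trans[OF zero_le_one]])
  have S_le: "S m \<le> dirichlet_lambda (2*k)" for m
    unfolding S_def dirichlet_lambda_def using assms
    by (intro sum_le_suminf summable_inverse_nth_odd_power) (auto simp: less_imp_le)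
  have "Tbar_term k (2*k) = (\<lambda>m. (-1)^m * (S m / nth_even m))"
    unfolding Tbar_term_def S_def cross_term_def sum_divide_distrib
    by (simp del: sum.lessThan_Suc)
  moreover have "summable (\<lambda>m. (-1)^m * (S m / nth_even m))"
  proof (rule summable_Leibniz'(1))
    show "(\<lambda>m. S m / nth_even m) \<longlonglongrightarrow> 0"
    proof (rule Lim_null_comparison)
      show "eventually (\<lambda>m. norm (S m / nth_even m) \<le> dirichlet_lambda (2*k) / (2 * real m + 2))
          sequentially"
        using S_le by (intro always_eventually allI) (simp add: S_abs nth_even_def divide_right_mono)
      show "(\<lambda>m. dirichlet_lambda (2*k) / (2 * real m + 2)) \<longlonglongrightarrow> 0" by real_asymp
    qed
    show "0 \<le> S m / nth_even m" for m
      using S_ge_1[of m] by (intro divide_nonneg_pos) auto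
    show "S (Suc m) / nth_even (Suc m) \<le> S m / nth_even m" for m
      unfolding S_def using assms by (intro sum_inverse_nth_odd_power_div_antimono) simp
  qed
  ultimately show ?thesis by simp
qed

lemma summable_Tbar_term: "1 \<le> k \<Longrightarrow> i \<in> {1..2*k} \<Longrightarrow> summable (Tbar_term k i)"
  using summable_Tbar_term_below[of i k] summable_Tbar_term_top[of k]
  by (cases "i = 2*k") auto

lemma row_total_eq_sum_Tbar_term: "(-1)^m * row_total k m = (\<Sum>i=1..2*k. Tbar_term k i m)"
  unfolding row_total_def cross_sum_def Tbar_term_def sum_distrib_left[symmetric]
  by (subst sum.swap) (rule refl)

lemma summable_alternating_row_total: "1 \<le> k \<Longrightarrow> summable (\<lambda>m. (-1)^m * row_total k m)"
  unfolding row_total_eq_sum_Tbar_term by (intro summable_sum summable_Tbar_term)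

lemma W_series_eq_sum_Tbar_term: "1 \<le> k \<Longrightarrow> W_series k = (\<Sum>i=1..2*k. suminf (Tbar_term k i))"
  unfolding W_series_def row_total_eq_sum_Tbar_term by (intro suminf_sum summable_Tbar_term)

text \<open>The first two terms n2 = 0, 1 of the series defining Tbar are empty sums.\<close>
lemma Tbar_eq_suminf_Tbar_term:
  assumes "1 \<le> k" "i \<in> {1..2*k}"
  shows "Tbar i (2*k+1-i) = 4 * suminf (Tbar_term k i)"
proof -
  define F where "F n2 = (\<Sum>n1\<in>{0<..<n2}.
      (-1)^n2 / ((2 * real n1 - 1) ^ i * (2 * real n2 - 2) ^ (2*k+1-i)))" for n2
  have "F (m + 2) = Tbar_term k i m" for m
  proof -
    have "{0<..<m + 2} = Suc ` {..<Suc m}" by (auto simp: image_iff less_Suc_eq_0_disj)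
    then have "F (m + 2) = (\<Sum>n<Suc m. (-1)^(m + 2) /
        ((2 * real (Suc n) - 1) ^ i * (2 * real (m + 2) - 2) ^ (2*k+1-i)))"
      unfolding F_def by (simp add: sum.reindex)
    then show ?thesis
      unfolding Tbar_term_def sum_distrib_left cross_term_def nth_odd_def nth_even_def
      by (simp add: algebra_simps)
  qed
  then have "(\<lambda>m. F (m + 2)) sums suminf (Tbar_term k i)"
    using summable_sums[OF summable_Tbar_term[OF assms]] by (simp only:)
  moreover have "F 0 = 0" "F 1 = 0" by (simp_all add: F_def)
  ultimately have "F sums suminf (Tbar_term k i)"
    using sums_iff_shift[of F 2] by (simp add: numeral_2_eq_2)
  then show ?thesis unfolding Tbar_def F_def[symmetric] by (simp add: sums_iff)
qed

lemma W2_eq_W_series: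
  assumes "1 \<le> k"
  shows "W2 (2*k+1) = 4 * W_series k"
proof -
  have "W2 (2*k+1) = (\<Sum>i=1..2*k. Tbar i (2*k+1-i))" by (simp add: W2_def)
  also have "\<dots> = (\<Sum>i=1..2*k. 4 * suminf (Tbar_term k i))"
    by (intro sum.cong refl Tbar_eq_suminf_Tbar_term assms)
  finally show ?thesis using W_series_eq_sum_Tbar_term[OF assms] by (simp add: sum_distrib_left)
qed

lemma W_series_eq:
  "1 \<le> k \<Longrightarrow> W_series k = (\<Sum>j=1..k. dirichlet_lambda (2*j+1) * alt_even_zeta (2*k - 2*j))"
  using LIMSEQ_unique triangle_partial_tendsto
    triangle_partial_tendsto_W_series[OF summable_alternating_row_total] by blast

lemma dirichlet_lambda_eq_zeta:
  assumes "2 \<le> s"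
  shows "dirichlet_lambda s = (1 - 1 / 2^s) * zeta_nat s"
proof -
  define f where "f n = 1 / real (Suc n) ^ s" for n
  have "summable f" unfolding f_def using assms by (rule summable_inverse_Suc_power)
  then have "(\<lambda>i. sum f {i*2..<i*2+2}) sums zeta_nat s"
    using sums_group[of f "zeta_nat s" 2] by (simp add: summable_sums zeta_nat_def f_def[abs_def])
  moreover have "sum f {i*2..<i*2+2} = 1 / nth_odd i ^ s + 1 / 2^s * f i" for i
  proof -
    have "{i*2..<i*2+2} = {2*i, 2*i+1}" by auto
    moreover have "real (Suc (2*i+1)) ^ s = 2^s * real (Suc i) ^ s"
      by (simp add: power_mult_distrib[symmetric])
    ultimately show ?thesis by (simp add: f_def nth_odd_def add.commute)
  qed
  ultimately have "(\<lambda>i. 1 / nth_odd i ^ s + 1 / 2^s * f i) sums zeta_nat s" by simp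
  moreover have "(\<lambda>i. 1 / nth_odd i ^ s + 1 / 2^s * f i) sums (dirichlet_lambda s + 1 / 2^s * zeta_nat s)"
    unfolding dirichlet_lambda_def zeta_nat_def f_def[symmetric]
    by (intro sums_add sums_mult summable_sums summable_inverse_nth_odd_power \<open>summable f\<close> assms)
  ultimately have "zeta_nat s = dirichlet_lambda s + 1 / 2^s * zeta_nat s" by (rule sums_unique2)
  then show ?thesis by (simp add: algebra_simps)
qed

lemma zeta_term_eq:
  assumes "j \<in> {1..k}"
  shows "(2 ^ (2*j+1) - 1) * zeta_nat (2*j+1) * zetabar (2*k - 2*j) =
    2 ^ (2*k+1) * (dirichlet_lambda (2*j+1) * alt_even_zeta (2*k - 2*j))"
proof -
  have "(2::real) ^ (2*k+1) = 2 ^ (2*j+1) * 2 ^ (2*k - 2*j)"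
    using assms by (simp flip: power_add)
  then show ?thesis
    using assms by (simp add: dirichlet_lambda_eq_zeta alt_even_zeta_def field_simps)
qed

theorem mainTheorem10:
  fixes k :: nat
  assumes "k \<ge> 1"
  shows "W2 (2 * k + 1) = 1 / 2 ^ (2 * k - 1) *
    (\<Sum>j = 1..k. (2 ^ (2 * j + 1) - 1) * zeta_nat (2 * j + 1) * zetabar (2 * k - 2 * j))"
proof -
  have "(\<Sum>j = 1..k. (2 ^ (2 * j + 1) - 1) * zeta_nat (2 * j + 1) * zetabar (2 * k - 2 * j))
      = 2 ^ (2*k+1) * W_series k"
    unfolding W_series_eq[OF assms] sum_distrib_left by (intro sum.cong refl) (rule zeta_term_eq)
  moreover have "2*k+1 = (2*k - 1) + 2" using assms by simp
  then have "(2::real) ^ (2*k+1) = 2 ^ (2*k - 1) * 4" by (simp only: power_add) simp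
  ultimately show ?thesis using W2_eq_W_series[OF assms] by simp
qed

end
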